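(* Let $G$ be a tree on $n$ vertices $1,2,\ldots,n$ with edges $e_1,\ldots,e_{n-1}$ and incidence matrix $M$, and let $S=M^TM$ be its signless edge-Laplacian. Then the Moore-Penrose inverse $S^+=[s^+_{i,j}]$ of $S$ is given by $$s^+_{i,j}=\frac{(-1)^{d(e_i,e_j)}}{n}\begin{cases}|G_H(e_i)|\,|G_T(e_i)| & \text{if } e_i=e_j,\\ -|G[e_i,e_j)|\,|G(e_i,e_j]| & \text{if } e_i\neq e_j.\end{cases}$$
   Context: The incidence matrix $M$ is the $n\times(n-1)$ matrix with $(i,j)$-entry $1$ if vertex $i$ is incident with edge $e_j$ and $0$ otherwise. Each edge is written $e_i=\{l_i,m_i\}$ with $l_i<m_i$. The head component $G_H(e_i)$ is the component of $G\setminus e_i$ containing $m_i$ and the tail component $G_T(e_i)$ the one containing $l_i$; $|X|$ is the number of vertices of $X$. For a vertex $j$ and edge $e_i=\{l_i,m_i\}$, $d(j,e_i)=d(e_i,j):=\min\{d(j,l_i),d(j,m_i)\}$ (graph distance), and for edges $d(e_i,e_k):=\min\{d(l_i,e_k),d(m_i,e_k)\}$. For distinct edges $e_i,e_j$, $G\setminus\{e_i,e_j\}$ has three components: $G[e_i,e_j)$ is the component containing an endpoint of $e_i$ but no endpoint of $e_j$, and $G(e_i,e_j]$ is the component containing an endpoint of $e_j$ but no endpoint of $e_i$. The Moore-Penrose inverse of a real matrix $A$ is the unique $A^+$ with $AA^+A=A$, $A^+AA^+=A^+$, $(AA^+)^T=AA^+$, $(A^+A)^T=A^+A$. *)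

theory Defs
  imports "Jordan_Normal_Form.Matrix"
begin

text \<open>A graph on vertices 0..<n with edges indexed by 0..<n-1; edge i is the pair
 (l i, m i) = e i with l i < m i.  Vertex k here corresponds to vertex k+1 in the paper,
 edge index i to edge e_(i+1).\<close>

definition ends :: "(nat \<Rightarrow> nat \<times> nat) \<Rightarrow> nat \<Rightarrow> nat set" where
  "ends e i = {fst (e i), snd (e i)}"

definition adj_wo :: "nat \<Rightarrow> (nat \<Rightarrow> nat \<times> nat) \<Rightarrow> nat set \<Rightarrow> nat \<Rightarrow> nat \<Rightarrow> bool" where
  "adj_wo n e X u v = (\<exists>i<n-1. i \<notin> X \<and> ends e i = {u, v})"

definition connected_wo :: "nat \<Rightarrow> (nat \<Rightarrow> nat \<times> nat) \<Rightarrow> nat set \<Rightarrow> nat \<Rightarrow> nat \<Rightarrow> bool" where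
  "connected_wo n e X u v = (adj_wo n e X)\<^sup>*\<^sup>* u v"

definition comp_wo :: "nat \<Rightarrow> (nat \<Rightarrow> nat \<times> nat) \<Rightarrow> nat set \<Rightarrow> nat \<Rightarrow> nat set" where
  "comp_wo n e X v = {u. u < n \<and> connected_wo n e X v u}"

text \<open>Tree: simple graph (edges with l < m, pairwise distinct, endpoints among the
 vertices), connected, and acyclic (no edge lies on a cycle, i.e. removing any edge
 disconnects its endpoints).\<close>
definition is_tree :: "nat \<Rightarrow> (nat \<Rightarrow> nat \<times> nat) \<Rightarrow> bool" where
  "is_tree n e =
    ((\<forall>i<n-1. fst (e i) < snd (e i) \<and> snd (e i) < n) \<and>
     (\<forall>i<n-1. \<forall>j<n-1. e i = e j \<longrightarrow> i = j) \<and>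
     (\<forall>u<n. \<forall>v<n. connected_wo n e {} u v) \<and>
     (\<forall>i<n-1. \<not> connected_wo n e {i} (fst (e i)) (snd (e i))))"

definition gdist :: "nat \<Rightarrow> (nat \<Rightarrow> nat \<times> nat) \<Rightarrow> nat \<Rightarrow> nat \<Rightarrow> nat" where
  "gdist n e u v = (LEAST k. (adj_wo n e {} ^^ k) u v)"

definition vdist_edge :: "nat \<Rightarrow> (nat \<Rightarrow> nat \<times> nat) \<Rightarrow> nat \<Rightarrow> nat \<Rightarrow> nat" where
  "vdist_edge n e v i = min (gdist n e v (fst (e i))) (gdist n e v (snd (e i)))"

definition edist :: "nat \<Rightarrow> (nat \<Rightarrow> nat \<times> nat) \<Rightarrow> nat \<Rightarrow> nat \<Rightarrow> nat" where
  "edist n e i k = min (vdist_edge n e (fst (e i)) k) (vdist_edge n e (snd (e i)) k)"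

definition head_comp :: "nat \<Rightarrow> (nat \<Rightarrow> nat \<times> nat) \<Rightarrow> nat \<Rightarrow> nat set" where
  "head_comp n e i = comp_wo n e {i} (snd (e i))"

definition tail_comp :: "nat \<Rightarrow> (nat \<Rightarrow> nat \<times> nat) \<Rightarrow> nat \<Rightarrow> nat set" where
  "tail_comp n e i = comp_wo n e {i} (fst (e i))"

text \<open>G[e_i,e_j): the component of G minus {e_i,e_j} containing an endpoint of e_i
 but no endpoint of e_j.  (G(e_i,e_j] is between_comp n e j i.)\<close>
definition between_comp :: "nat \<Rightarrow> (nat \<Rightarrow> nat \<times> nat) \<Rightarrow> nat \<Rightarrow> nat \<Rightarrow> nat set" where
  "between_comp n e i j =
    (THE C. \<exists>x\<in>ends e i. C = comp_wo n e {i, j} x \<and> C \<inter> ends e j = {})"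

definition incidence_mat :: "nat \<Rightarrow> (nat \<Rightarrow> nat \<times> nat) \<Rightarrow> real mat" where
  "incidence_mat n e = mat n (n-1) (\<lambda>(v, i). if v \<in> ends e i then 1 else 0)"

definition moore_penrose :: "real mat \<Rightarrow> real mat \<Rightarrow> bool" where
  "moore_penrose A B =
    (B \<in> carrier_mat (dim_col A) (dim_row A) \<and> A * B * A = A \<and> B * A * B = B \<and>
     transpose_mat (A * B) = A * B \<and> transpose_mat (B * A) = B * A)"

definition mp_inverse :: "real mat \<Rightarrow> real mat" where
  "mp_inverse A = (THE B. moore_penrose A B)"

end

theory Submission
  imports Defs "Jordan_Normal_Form.Determinant"
begin

text \<open>Colour each vertex v by vsign v = (-1)^(depth of v below vertex 0), so that
  N = diag(vsign) M is the incidence matrix of an orientation of the tree and S = N^T N.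
  Fix an edge e_k and let q_k be the vector equal to vsign(l_k) |G_H(e_k)| / n on G_T(e_k) and
  to -vsign(l_k) |G_T(e_k)| / n on G_H(e_k).  Then N^T q_k is the k-th unit vector, and since
  q_k has zero sum and the tree is connected, q_k = N c for some c.  Summing N c over a vertex
  set that meets e_j in one endpoint and is closed under all other edges picks out c_j; choosing
  for this set a component of G - {e_j, e_k} on which q_k is constant, one reads off that c_j is
  the claimed (j, k) entry.  Hence S times the claimed matrix is the identity, so S is
  invertible and the claimed matrix is S^{-1} = S^+.\<close>

lemma relpowp_leaves_set:
  assumes "(R ^^ L) x y" "x \<in> Y" "y \<notin> Y"
  shows "\<exists>i a b. i < L \<and> (R ^^ i) x a \<and> a \<in> Y \<and> R a b \<and> b \<notin> Y \<and>
    (R ^^ (L - Suc i)) b y"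
  using assms
proof (induction L arbitrary: x)
  case 0
  then show ?case by auto
next
  case (Suc L)
  from relpowp_Suc_D2[OF Suc.prems(1)] obtain z where z: "R x z" "(R ^^ L) z y" by blast
  show ?case
  proof (cases "z \<in> Y")
    case True
    from Suc.IH[OF z(2) True Suc.prems(3)] obtain i a b where
      h: "i < L" "(R ^^ i) z a" "a \<in> Y" "R a b" "b \<notin> Y" "(R ^^ (L - Suc i)) b y" by blast
    have "(R ^^ Suc i) x a" using z(1) h(2) by (rule relpowp_Suc_I2)
    then show ?thesis using h by (intro exI[of _ "Suc i"]) auto
  next
    case False
    then show ?thesis using z Suc.prems by (intro exI[of _ 0]) auto
  qed
qed

lemma mp_inverse_eq_inverse:
  fixes S B :: "real mat"
  assumes S: "S \<in> carrier_mat N N" and B: "B \<in> carrier_mat N N" and SB: "S * B = 1\<^sub>m N"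
  shows "mp_inverse S = B"
  unfolding mp_inverse_def
proof (rule the_equality)
  have BS: "B * S = 1\<^sub>m N"
    using mat_mult_left_right_inverse[OF S B SB] .
  then show "moore_penrose S B"
    unfolding moore_penrose_def using S B SB by (simp add: assoc_mult_mat[OF S B S])
next
  fix B' assume "moore_penrose S B'"
  then have B': "B' \<in> carrier_mat N N" and SB'S: "S * B' * S = S"
    using S unfolding moore_penrose_def by auto
  have "B' = B * (S * B' * S) * B"
    using S B B' SB mat_mult_left_right_inverse[OF S B SB]
    by (simp add: assoc_mult_mat[of _ N N _ N _ N] assoc_mult_mat[OF B S B', symmetric])
  then show "B' = B"
    using SB'S S B SB by (simp add: assoc_mult_mat[OF B S B])
qed

locale tree =
  fixes n :: nat and e :: "nat \<Rightarrow> nat \<times> nat"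
  assumes tree: "is_tree n e"
begin

abbreviation "l i \<equiv> fst (e i)"
abbreviation "m i \<equiv> snd (e i)"
abbreviation "adj X \<equiv> adj_wo n e X"
abbreviation "conn X \<equiv> connected_wo n e X"

section \<open>Deleting edges from a tree\<close>

lemma edge_less: "i < n - 1 \<Longrightarrow> l i < m i \<and> m i < n"
  using tree unfolding is_tree_def by auto

lemma conn_all: "u < n \<Longrightarrow> v < n \<Longrightarrow> conn {} u v"
  using tree unfolding is_tree_def by auto

lemma edge_is_bridge: "i < n - 1 \<Longrightarrow> \<not> conn {i} (l i) (m i)"
  using tree unfolding is_tree_def by auto

lemma ends_eq: "ends e i = {l i, m i}"
  unfolding ends_def by simp

definition joins :: "nat \<Rightarrow> nat \<Rightarrow> nat \<Rightarrow> bool" where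
  "joins k p q \<longleftrightarrow> k < n - 1 \<and> (p = l k \<and> q = m k \<or> p = m k \<and> q = l k)"

lemma joins_edge: "i < n - 1 \<Longrightarrow> joins i (l i) (m i)"
  and joins_edge': "i < n - 1 \<Longrightarrow> joins i (m i) (l i)"
  unfolding joins_def by auto

lemma joins_sym: "joins k p q \<Longrightarrow> joins k q p"
  unfolding joins_def by auto

lemma joins_less: "joins k p q \<Longrightarrow> p < n \<and> q < n \<and> p \<noteq> q"
  unfolding joins_def using edge_less by fastforce

lemma joins_ends: "joins k p q \<Longrightarrow> ends e k = {p, q}"
  unfolding joins_def ends_def by auto

lemma adj_iff: "adj X u v \<longleftrightarrow> (\<exists>i. i \<notin> X \<and> joins i u v)"
  unfolding adj_wo_def joins_def ends_def by (auto simp: doubleton_eq_iff)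

lemma adj_sym: "adj X u v \<Longrightarrow> adj X v u"
  unfolding adj_iff using joins_sym by blast

lemma adj_insert_cases: "adj X u v \<Longrightarrow> adj (insert j X) u v \<or> joins j u v"
  unfolding adj_iff by auto

lemma conn_refl: "conn X u u"
  unfolding connected_wo_def by simp

lemma conn_sym: "conn X u v \<Longrightarrow> conn X v u"
  unfolding connected_wo_def
  by (induction rule: rtranclp.induct) (auto intro: converse_rtranclp_into_rtranclp adj_sym)

lemma conn_trans: "conn X u v \<Longrightarrow> conn X v w \<Longrightarrow> conn X u w"
  unfolding connected_wo_def by auto

lemma conn_antimono: "X \<subseteq> Y \<Longrightarrow> conn Y u v \<Longrightarrow> conn X u v"
  unfolding connected_wo_def adj_iff
  by (erule mono_rtranclp[rule_format, rotated]) blast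

lemma conn_less: "conn X u v \<Longrightarrow> u < n \<Longrightarrow> v < n"
  unfolding connected_wo_def
  by (induction rule: rtranclp.induct) (auto simp: adj_iff dest: joins_less)

lemma conn_joins: "joins i u v \<Longrightarrow> i \<notin> X \<Longrightarrow> conn X u v"
  unfolding connected_wo_def adj_iff by auto

lemma conn_insert_cases:
  assumes "conn X u v"
  shows "conn (insert j X) u v \<or> (conn (insert j X) u (l j) \<and> conn (insert j X) (m j) v)
       \<or> (conn (insert j X) u (m j) \<and> conn (insert j X) (l j) v)"
  using assms unfolding connected_wo_def
proof (induction rule: rtranclp.induct)
  case (rtrancl_into_rtrancl a b c)
  from adj_insert_cases[OF rtrancl_into_rtrancl(2), of j] show ?case
  proof
    assume "adj (insert j X) b c"
    then show ?thesis using rtrancl_into_rtrancl(3) by (meson rtranclp.rtrancl_into_rtrancl)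
  next
    assume "joins j b c"
    then show ?thesis using rtrancl_into_rtrancl(3) unfolding joins_def by auto
  qed
qed simp

lemma joins_not_conn: "joins k p q \<Longrightarrow> \<not> conn {k} p q"
  unfolding joins_def using edge_is_bridge conn_sym by blast

lemma conn_either_end:
  assumes "joins k p q" "v < n"
  shows "conn {k} p v \<or> conn {k} q v"
proof -
  have "conn {} p v" using conn_all joins_less[OF assms(1)] assms(2) by blast
  from conn_insert_cases[OF this, of k] show ?thesis
    using assms(1) unfolding joins_def by (auto intro: conn_sym)
qed

lemma conn_not_both_ends: "joins k p q \<Longrightarrow> conn {k} p v \<Longrightarrow> \<not> conn {k} q v"
  using joins_not_conn conn_sym conn_trans by blast

lemma conn_across_other_edge:
  "joins i u v \<Longrightarrow> i \<notin> X \<Longrightarrow> conn X x u \<longleftrightarrow> conn X x v"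
  using conn_joins conn_sym conn_trans by (metis joins_sym)

section \<open>Vertex signs and distances\<close>

definition vsign :: "nat \<Rightarrow> real" where
  "vsign v = (-1) ^ card {j. j < n - 1 \<and> \<not> conn {j} 0 v}"

lemma vsign_sq: "vsign v * vsign v = 1"
  unfolding vsign_def by (simp add: power_mult_distrib[symmetric])

lemma vsign_nonzero: "vsign v \<noteq> 0"
  using vsign_sq[of v] by auto

lemma vsign_joins:
  assumes uv: "joins i u v"
  shows "vsign v = - vsign u"
proof -
  let ?Su = "{j. j < n - 1 \<and> \<not> conn {j} 0 u}"
  let ?Sv = "{j. j < n - 1 \<and> \<not> conn {j} 0 v}"
  have i: "i < n - 1" using uv unfolding joins_def by simp
  have same: "j \<noteq> i \<Longrightarrow> conn {j} 0 u \<longleftrightarrow> conn {j} 0 v" for j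
    using conn_across_other_edge[OF uv] by simp
  have "0 < n" using joins_less[OF uv] by simp
  then consider "conn {i} u 0" | "conn {i} v 0"
    using conn_either_end[OF uv] by blast
  then consider "conn {i} 0 u" "\<not> conn {i} 0 v" | "conn {i} 0 v" "\<not> conn {i} 0 u"
    using conn_not_both_ends[OF uv] conn_not_both_ends[OF joins_sym[OF uv]] conn_sym by metis
  then show ?thesis
  proof cases
    case 1
    then have "?Sv = insert i ?Su" "i \<notin> ?Su" using same i by fastforce+
    then show ?thesis unfolding vsign_def by simp
  next
    case 2
    then have "?Su = insert i ?Sv" "i \<notin> ?Sv" using same i by fastforce+
    then show ?thesis unfolding vsign_def by simp
  qed
qed

lemma vsign_relpowp: "(adj {} ^^ L) u v \<Longrightarrow> vsign u * vsign v = (-1) ^ L"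
proof (induction L arbitrary: v)
  case 0
  then show ?case using vsign_sq by simp
next
  case (Suc L)
  then obtain y where "(adj {} ^^ L) u y" "adj {} y v" by auto
  then show ?case using Suc.IH vsign_joins by (fastforce simp: adj_iff)
qed

lemma gdist_relpowp: "u < n \<Longrightarrow> v < n \<Longrightarrow> (adj {} ^^ gdist n e u v) u v"
  using conn_all unfolding gdist_def connected_wo_def rtranclp_power by (rule LeastI_ex)

lemma gdist_le: "(adj {} ^^ L) u v \<Longrightarrow> gdist n e u v \<le> L"
  unfolding gdist_def by (rule Least_le)

lemma gdist_self: "gdist n e u u = 0"
  using gdist_le[of 0 u u] by simp

lemma adj_relpowp_sym: "(adj X ^^ L) u v \<Longrightarrow> (adj X ^^ L) v u"
proof (induction L arbitrary: v)
  case (Suc L)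
  then obtain y where "(adj X ^^ L) u y" "adj X y v" by auto
  then show ?case using Suc.IH adj_sym relpowp_Suc_I2 by metis
qed simp

lemma gdist_sym: "u < n \<Longrightarrow> v < n \<Longrightarrow> gdist n e u v = gdist n e v u"
  using gdist_le gdist_relpowp adj_relpowp_sym by (metis le_antisym)

lemma neg_one_power_gdist: "u < n \<Longrightarrow> v < n \<Longrightarrow> (-1) ^ gdist n e u v = vsign u * vsign v"
  using vsign_relpowp gdist_relpowp by metis

text \<open>A shortest walk from x to q leaves the side of edge k containing x only through k,
  and so passes through p.\<close>
lemma gdist_lt_across:
  assumes pq: "joins k p q" and x: "conn {k} p x"
  shows "gdist n e x p < gdist n e x q"
proof -
  let ?L = "gdist n e x q" and ?Y = "{v. conn {k} p v}"
  have "x < n" "q < n" using conn_less[OF x] joins_less[OF pq] by auto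
  then have walk: "(adj {} ^^ ?L) x q" by (rule gdist_relpowp)
  have "q \<notin> ?Y" using joins_not_conn[OF pq] by simp
  from relpowp_leaves_set[OF walk _ this] x obtain i a b where
    i: "i < ?L" "(adj {} ^^ i) x a" and ab: "a \<in> ?Y" "adj {} a b" "b \<notin> ?Y"
    by auto
  have "a = p"
    using adj_insert_cases[OF ab(2), of k]
  proof
    assume "adj {k} a b"
    then have "conn {k} a b" unfolding connected_wo_def by auto
    then show ?thesis using ab conn_trans by auto
  next
    assume "joins k a b"
    then show ?thesis using pq ab conn_refl joins_not_conn unfolding joins_def by auto
  qed
  then show ?thesis using gdist_le[OF i(2)] i(1) by simp
qed

section \<open>The oriented incidence matrix\<close>

definition inc :: "nat \<Rightarrow> nat \<Rightarrow> real" where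
  "inc v i = (if v \<in> ends e i then 1 else 0)"

text \<open>The vector N c, for N = diag(vsign) M the incidence matrix of an orientation of G.\<close>
definition signed_inc :: "(nat \<Rightarrow> real) \<Rightarrow> nat \<Rightarrow> real" where
  "signed_inc c v = (\<Sum>i<n - 1. vsign v * inc v i * c i)"

lemma signed_inc_add: "signed_inc (\<lambda>i. c i + d i) v = signed_inc c v + signed_inc d v"
  unfolding signed_inc_def by (simp add: sum.distrib distrib_left)

lemma signed_inc_sum:
  "finite U \<Longrightarrow>
    signed_inc (\<lambda>i. \<Sum>u\<in>U. a u * c u i) v = (\<Sum>u\<in>U. a u * signed_inc (c u) v)"
  unfolding signed_inc_def by (simp add: sum_distrib_left sum.swap[of _ U] mult_ac)

lemma signed_inc_cong:
  "(\<And>i. i < n - 1 \<Longrightarrow> c i = d i) \<Longrightarrow> signed_inc c v = signed_inc d v"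
  unfolding signed_inc_def by simp

lemma sum_inc_mult:
  assumes i: "i < n - 1" and X: "finite X"
  shows "(\<Sum>v\<in>X. inc v i * f v) = (if l i \<in> X then f (l i) else 0) + (if m i \<in> X then f (m i) else 0)"
proof -
  have "(\<Sum>v\<in>X. inc v i * f v) = (\<Sum>v\<in>X. if v \<in> {l i, m i} then f v else 0)"
    unfolding inc_def ends_eq by (intro sum.cong) auto
  also have "\<dots> = (\<Sum>v\<in>X \<inter> {l i, m i}. f v)"
    by (rule sum.inter_restrict[OF X, symmetric])
  also have "\<dots> = (if l i \<in> X then f (l i) else 0) + (if m i \<in> X then f (m i) else 0)"
    using edge_less[OF i] by (cases "l i \<in> X"; cases "m i \<in> X") (auto simp: Int_insert_right)
  finally show ?thesis .
qed

lemma signed_inc_joins: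
  assumes "joins i u w"
  shows "signed_inc (\<lambda>j. if j = i then vsign u else 0) x =
    (if x = u then 1 else 0) - (if x = w then 1 else 0)"
proof -
  have i: "i < n - 1" using assms unfolding joins_def by simp
  have uw: "u \<noteq> w" "ends e i = {u, w}" using joins_less[OF assms] joins_ends[OF assms] by auto
  have "signed_inc (\<lambda>j. if j = i then vsign u else 0) x = vsign x * inc x i * vsign u"
    unfolding signed_inc_def using i by (simp add: if_distrib sum.delta cong: if_cong)
  then show ?thesis
    using uw vsign_joins[OF assms] vsign_sq[of u] unfolding inc_def by auto
qed

lemma signed_inc_onto_difference:
  assumes "u < n" "w < n"
  shows "\<exists>c. \<forall>x<n. signed_inc c x = (if x = u then 1 else 0) - (if x = w then 1 else 0)"
  using conn_all[OF assms] unfolding connected_wo_def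
proof (induction rule: rtranclp.induct)
  case (rtrancl_refl a)
  then show ?case by (intro exI[of _ "\<lambda>_. 0"]) (simp add: signed_inc_def)
next
  case (rtrancl_into_rtrancl a b c)
  then obtain d where d: "\<forall>x<n. signed_inc d x = (if x = a then 1 else 0) - (if x = b then 1 else 0)"
    by blast
  from rtrancl_into_rtrancl(2) obtain i where "joins i b c" by (auto simp: adj_iff)
  from signed_inc_joins[OF this] d show ?case
    by (intro exI[of _ "\<lambda>j. d j + (if j = i then vsign b else 0)"]) (simp add: signed_inc_add)
qed

lemma signed_inc_onto_zero_sum:
  assumes f: "(\<Sum>x<n. f x) = 0"
  shows "\<exists>c. \<forall>x<n. signed_inc c x = f x"
proof (cases "n = 0")
  case False
  let ?\<delta> = "\<lambda>u x. (if x = u then 1 else 0) - (if x = 0 then 1 else (0::real))"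
  have "\<forall>u. \<exists>c. u < n \<longrightarrow> (\<forall>x<n. signed_inc c x = ?\<delta> u x)"
    using signed_inc_onto_difference[of _ 0] False by blast
  then obtain d where d: "\<And>u x. u < n \<Longrightarrow> x < n \<Longrightarrow> signed_inc (d u) x = ?\<delta> u x"
    by (metis choice)
  have "signed_inc (\<lambda>i. \<Sum>u<n. f u * d u i) x = f x" if x: "x < n" for x
  proof -
    have "signed_inc (\<lambda>i. \<Sum>u<n. f u * d u i) x = (\<Sum>u<n. f u * ?\<delta> u x)"
      by (simp add: signed_inc_sum d x)
    also have "\<dots> =
        (\<Sum>u<n. f u * (if x = u then 1 else 0)) - (\<Sum>u<n. f u) * (if x = 0 then 1 else 0)"
      by (simp add: right_diff_distrib sum_subtractf sum_distrib_right)
    also have "\<dots> = f x"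
      using x f by (simp add: if_distrib cong: if_cong)
    finally show ?thesis .
  qed
  then show ?thesis by blast
qed simp

definition cut_side :: "nat \<Rightarrow> nat \<Rightarrow> nat set \<Rightarrow> bool" where
  "cut_side j z X \<longleftrightarrow> X \<subseteq> {..<n} \<and> X \<inter> ends e j = {z} \<and>
     (\<forall>i<n - 1. i \<noteq> j \<longrightarrow> (l i \<in> X \<longleftrightarrow> m i \<in> X))"

text \<open>Every column of N other than j sums to zero over X, the column j to vsign z.\<close>
lemma sum_signed_inc_cut_side:
  assumes X: "cut_side j z X" and j: "j < n - 1"
  shows "(\<Sum>v\<in>X. signed_inc c v) = vsign z * c j"
proof -
  have fin: "finite X" using X unfolding cut_side_def by (auto intro: finite_subset)
  have col: "(\<Sum>v\<in>X. inc v i * vsign v) = (if i = j then vsign z else 0)" if i: "i < n - 1" for i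
  proof (cases "i = j")
    case True
    then show ?thesis
      using X edge_less[OF i] unfolding sum_inc_mult[OF i fin] cut_side_def ends_eq
      by (auto simp: doubleton_eq_iff)
  next
    case False
    then show ?thesis
      using X i vsign_joins[OF joins_edge[OF i]]
      unfolding sum_inc_mult[OF i fin] cut_side_def by auto
  qed
  have "(\<Sum>v\<in>X. signed_inc c v) = (\<Sum>i<n - 1. c i * (\<Sum>v\<in>X. inc v i * vsign v))"
    unfolding signed_inc_def by (simp add: sum.swap[of _ X] sum_distrib_left mult_ac)
  also have "\<dots> = vsign z * c j"
    using j by (simp add: col if_distrib cong: if_cong)
  finally show ?thesis .
qed

section \<open>The columns of the inverse\<close>

lemma mem_comp_wo: "x \<in> comp_wo n e X v \<longleftrightarrow> x < n \<and> conn X v x"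
  unfolding comp_wo_def by simp

lemma finite_comp_wo: "finite (comp_wo n e X v)"
  unfolding comp_wo_def by simp

lemma comp_wo_joins_partition:
  assumes "joins k p q"
  shows "comp_wo n e {k} p \<union> comp_wo n e {k} q = {..<n}"
    and "comp_wo n e {k} p \<inter> comp_wo n e {k} q = {}"
  using conn_not_both_ends[OF assms]
  by (auto simp: mem_comp_wo dest: conn_either_end[OF assms])

lemma card_comp_wo_joins:
  "joins k p q \<Longrightarrow> card (comp_wo n e {k} p) + card (comp_wo n e {k} q) = n"
  using card_Un_disjoint[OF finite_comp_wo finite_comp_wo] comp_wo_joins_partition
  by (metis card_lessThan)

definition pinv_entry :: "nat \<Rightarrow> nat \<Rightarrow> real" where
  "pinv_entry i j = (-1) ^ edist n e i j / real n *
      (if i = j then real (card (head_comp n e i)) * real (card (tail_comp n e i))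
       else - (real (card (between_comp n e i j)) * real (card (between_comp n e j i))))"

text \<open>This will turn out to be N applied to column k of the claimed inverse.\<close>
definition qvec :: "nat \<Rightarrow> nat \<Rightarrow> real" where
  "qvec k x = (if conn {k} (l k) x then vsign (l k) * card (head_comp n e k) / n
               else - vsign (l k) * card (tail_comp n e k) / n)"

lemma qvec_joins:
  assumes pq: "joins k p q" and x: "conn {k} p x"
  shows "qvec k x = vsign p * card (comp_wo n e {k} q) / n"
proof (cases "p = l k")
  case True
  then show ?thesis
    using pq x unfolding qvec_def head_comp_def joins_def by auto
next
  case False
  then have "p = m k" "q = l k" using pq unfolding joins_def by auto
  moreover have "\<not> conn {k} q x" using conn_not_both_ends[OF pq x] .
  ultimately show ?thesis
    using vsign_joins[OF pq] unfolding qvec_def tail_comp_def by simp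
qed

lemma sum_qvec_comp_wo:
  assumes pq: "joins k p q"
  shows "(\<Sum>x\<in>comp_wo n e {k} p. qvec k x) =
    vsign p * card (comp_wo n e {k} p) * card (comp_wo n e {k} q) / n"
  using qvec_joins[OF pq] by (simp add: mem_comp_wo)

lemma sum_qvec:
  assumes k: "k < n - 1"
  shows "(\<Sum>x<n. qvec k x) = 0"
proof -
  let ?P = "comp_wo n e {k} (l k)" and ?Q = "comp_wo n e {k} (m k)"
  have "(\<Sum>x<n. qvec k x) = (\<Sum>x\<in>?P. qvec k x) + (\<Sum>x\<in>?Q. qvec k x)"
    using comp_wo_joins_partition[OF joins_edge[OF k]]
    by (simp add: sum.union_disjoint[symmetric] finite_comp_wo)
  then show ?thesis
    using sum_qvec_comp_wo[OF joins_edge[OF k]] sum_qvec_comp_wo[OF joins_edge'[OF k]]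
      vsign_joins[OF joins_edge[OF k]] by simp
qed

lemma qvec_jump:
  assumes i: "i < n - 1" and k: "k < n - 1"
  shows "qvec k (l i) - qvec k (m i) = (if i = k then vsign (l k) else 0)"
proof (cases "i = k")
  case True
  have "qvec k (l k) - qvec k (m k) =
    vsign (l k) * (card (comp_wo n e {k} (l k)) + card (comp_wo n e {k} (m k))) / n"
    using qvec_joins[OF joins_edge[OF k] conn_refl] qvec_joins[OF joins_edge'[OF k] conn_refl]
      vsign_joins[OF joins_edge[OF k]] by (simp add: distrib_left add_divide_distrib)
  also have "\<dots> = vsign (l k)"
    using card_comp_wo_joins[OF joins_edge[OF k]] k by simp
  finally show ?thesis using True by simp
next
  case False
  then have "conn {k} (l k) (l i) \<longleftrightarrow> conn {k} (l k) (m i)"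
    using conn_across_other_edge[OF joins_edge[OF i]] by simp
  then show ?thesis using False unfolding qvec_def by simp
qed

text \<open>Edge j = {u, w} lies on p's side of edge k = {p, q}, and u is its endpoint nearer to p.\<close>
definition near_far :: "nat \<Rightarrow> nat \<Rightarrow> nat \<Rightarrow> nat \<Rightarrow> nat \<Rightarrow> nat \<Rightarrow> bool" where
  "near_far k p q j u w \<longleftrightarrow> joins k p q \<and> joins j u w \<and> j \<noteq> k \<and> conn {j, k} p u"

lemma near_far_exists:
  assumes j: "j < n - 1" and k: "k < n - 1" and jk: "j \<noteq> k"
  shows "\<exists>p q u w. near_far k p q j u w"
proof -
  have "l j < n" using edge_less[OF j] by simp
  from conn_either_end[OF joins_edge[OF k] this]
  obtain p q where pq: "joins k p q" "conn {k} p (l j)"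
    using joins_edge[OF k] joins_edge'[OF k] by blast
  from conn_insert_cases[OF pq(2), of j] have "conn {j, k} p (l j) \<or> conn {j, k} p (m j)"
    by auto
  then show ?thesis
    using pq(1) joins_edge[OF j] joins_edge'[OF j] jk unfolding near_far_def by blast
qed

context
  fixes k p q j u w
  assumes nf: "near_far k p q j u w"
begin

lemma near_far_joins: "joins k p q" "joins j u w"
  and near_far_ne: "j \<noteq> k"
  and near_far_conn: "conn {j, k} p u"
  using nf unfolding near_far_def by auto

lemma near_far_less: "p < n" "q < n" "u < n" "w < n"
  using joins_less near_far_joins by auto

lemma near_not_conn_far: "\<not> conn {j, k} u w"
  using joins_not_conn[OF near_far_joins(2)] conn_antimono[of "{j}" "{j, k}"] by blast

lemma conn_k_near: "conn {k} p u"
  using near_far_conn conn_antimono[of "{k}" "{j, k}"] by blast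

lemma conn_k_far: "conn {k} p w"
  using conn_k_near conn_across_other_edge[OF near_far_joins(2)] near_far_ne by simp

abbreviation "far_comp \<equiv> comp_wo n e {j, k} w"

lemma far_comp_side: "v \<in> far_comp \<Longrightarrow> conn {k} p v"
  unfolding mem_comp_wo using conn_k_far conn_trans conn_antimono[of "{k}" "{j, k}"] by blast

lemma far_comp_ends: "far_comp \<inter> ends e j = {w}" "far_comp \<inter> ends e k = {}"
proof -
  have "w \<in> far_comp" using near_far_less conn_refl by (simp add: mem_comp_wo)
  moreover have "u \<notin> far_comp" "p \<notin> far_comp"
    unfolding mem_comp_wo using near_not_conn_far near_far_conn conn_sym conn_trans by blast+
  moreover have "q \<notin> far_comp"
    using far_comp_side joins_not_conn[OF near_far_joins(1)] by blast
  ultimately show "far_comp \<inter> ends e j = {w}" "far_comp \<inter> ends e k = {}"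
    using joins_ends[OF near_far_joins(1)] joins_ends[OF near_far_joins(2)] by auto
qed

lemma cut_side_far: "cut_side j w far_comp"
  unfolding cut_side_def
proof (intro conjI allI impI)
  fix i assume i: "i < n - 1" "i \<noteq> j"
  show "l i \<in> far_comp \<longleftrightarrow> m i \<in> far_comp"
  proof (cases "i = k")
    case True
    then show ?thesis using far_comp_ends(2) unfolding ends_eq by auto
  next
    case False
    then show ?thesis
      using i conn_across_other_edge[OF joins_edge[OF i(1)], of "{j, k}"] edge_less[OF i(1)]
      by (auto simp: mem_comp_wo)
  qed
qed (use far_comp_ends(1) in \<open>auto simp: mem_comp_wo\<close>)

lemma between_near_far: "between_comp n e j k = far_comp"
  unfolding between_comp_def
proof (rule the_equality)
  show "\<exists>x\<in>ends e j. far_comp = comp_wo n e {j, k} x \<and> far_comp \<inter> ends e k = {}"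
    using joins_ends[OF near_far_joins(2)] far_comp_ends(2) by auto
next
  fix D assume "\<exists>x\<in>ends e j. D = comp_wo n e {j, k} x \<and> D \<inter> ends e k = {}"
  moreover have "p \<in> comp_wo n e {j, k} u"
    using near_far_conn near_far_less conn_sym by (simp add: mem_comp_wo)
  ultimately show "D = far_comp"
    using joins_ends[OF near_far_joins(1)] joins_ends[OF near_far_joins(2)] by auto
qed

lemma comp_wo_across: "comp_wo n e {j, k} q = comp_wo n e {k} q"
proof -
  have "conn {j, k} q v" if "conn {k} q v" for v
  proof -
    have "\<not> conn {k} q (l j)" "\<not> conn {k} q (m j)"
      using conn_not_both_ends[OF near_far_joins(1) conn_k_near]
        conn_not_both_ends[OF near_far_joins(1) conn_k_far] near_far_joins(2)
      unfolding joins_def by auto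
    then show ?thesis
      using conn_insert_cases[OF that, of j] conn_antimono[of "{k}" "{j, k}"]
      by (auto simp: insert_commute)
  qed
  then show ?thesis
    using conn_antimono[of "{k}" "{j, k}"] unfolding comp_wo_def by blast
qed

lemma between_far_near: "between_comp n e k j = comp_wo n e {k} q"
  unfolding between_comp_def
proof (rule the_equality)
  have "comp_wo n e {k} q \<inter> {u, w} = {}"
    using conn_not_both_ends[OF near_far_joins(1) conn_k_near]
      conn_not_both_ends[OF near_far_joins(1) conn_k_far]
    by (auto simp: mem_comp_wo)
  then show "\<exists>x\<in>ends e k. comp_wo n e {k} q = comp_wo n e {k, j} x \<and>
      comp_wo n e {k} q \<inter> ends e j = {}"
    using joins_ends near_far_joins comp_wo_across by (auto simp: insert_commute)
next
  fix D assume "\<exists>x\<in>ends e k. D = comp_wo n e {k, j} x \<and> D \<inter> ends e j = {}"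
  moreover have "u \<in> comp_wo n e {k, j} p"
    using near_far_conn near_far_less by (simp add: mem_comp_wo insert_commute)
  ultimately show "D = comp_wo n e {k} q"
    using joins_ends near_far_joins comp_wo_across by (auto simp: insert_commute)
qed

lemma edist_near_far: "edist n e j k = gdist n e u p"
proof -
  have "gdist n e p u < gdist n e p w"
    using gdist_lt_across[OF near_far_joins(2)] near_far_conn conn_sym conn_antimono[of "{j}" "{j, k}"]
    by blast
  then have "gdist n e u p < gdist n e w p"
    using gdist_sym near_far_less by simp
  moreover have "gdist n e u p < gdist n e u q" "gdist n e w p < gdist n e w q"
    using gdist_lt_across[OF near_far_joins(1)] conn_k_near conn_k_far by auto
  ultimately show ?thesis
    using near_far_joins unfolding edist_def vdist_edge_def joins_def by (auto simp: min_def)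
qed

lemma sum_qvec_far: "(\<Sum>v\<in>far_comp. qvec k v) = vsign w * pinv_entry j k"
proof -
  let ?F = "real (card far_comp)" and ?Q = "real (card (comp_wo n e {k} q))"
  have "(\<Sum>v\<in>far_comp. qvec k v) = ?F * (vsign p * ?Q / n)"
    using qvec_joins[OF near_far_joins(1) far_comp_side] by simp
  moreover have "vsign w * pinv_entry j k = (vsign u * vsign u) * (?F * (vsign p * ?Q / n))"
    unfolding pinv_entry_def edist_near_far between_near_far between_far_near
    using near_far_ne neg_one_power_gdist near_far_less vsign_joins[OF near_far_joins(2)] by simp
  ultimately show ?thesis
    using vsign_sq by simp
qed

end

lemma cut_side_comp_wo: "joins k p q \<Longrightarrow> cut_side k p (comp_wo n e {k} p)"
  unfolding cut_side_def
proof (intro conjI allI impI)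
  fix i assume pq: "joins k p q" and i: "i < n - 1" "i \<noteq> k"
  then show "l i \<in> comp_wo n e {k} p \<longleftrightarrow> m i \<in> comp_wo n e {k} p"
    using conn_across_other_edge[OF joins_edge[OF i(1)], of "{k}"] edge_less[OF i(1)]
    by (auto simp: mem_comp_wo)
qed (auto simp: mem_comp_wo joins_ends conn_refl dest: joins_less joins_not_conn)

lemma cut_side_sum_qvec:
  assumes j: "j < n - 1" and k: "k < n - 1"
  shows "\<exists>X z. cut_side j z X \<and> (\<Sum>v\<in>X. qvec k v) = vsign z * pinv_entry j k"
proof (cases "j = k")
  case True
  have "edist n e k k = 0"
    unfolding edist_def vdist_edge_def by (simp add: gdist_self)
  then have "(\<Sum>v\<in>tail_comp n e k. qvec k v) = vsign (l k) * pinv_entry k k"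
    using sum_qvec_comp_wo[OF joins_edge[OF k]]
    unfolding pinv_entry_def tail_comp_def head_comp_def by simp
  then show ?thesis
    using True cut_side_comp_wo[OF joins_edge[OF k]] unfolding tail_comp_def by blast
next
  case False
  then obtain p q u w where "near_far k p q j u w"
    using near_far_exists j k by blast
  then show ?thesis
    using cut_side_far sum_qvec_far by blast
qed

text \<open>Any preimage c of qvec k under N is forced, edge by edge, to be column k of the claimed
  inverse: summing over a cut side of edge j isolates c j.\<close>
lemma signed_inc_pinv_col:
  assumes k: "k < n - 1" and x: "x < n"
  shows "signed_inc (\<lambda>j. pinv_entry j k) x = qvec k x"
proof -
  obtain c where c: "\<forall>x<n. signed_inc c x = qvec k x"
    using signed_inc_onto_zero_sum[OF sum_qvec[OF k]] by blast
  have "c j = pinv_entry j k" if j: "j < n - 1" for j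
  proof -
    obtain X z where X: "cut_side j z X" and sum: "(\<Sum>v\<in>X. qvec k v) = vsign z * pinv_entry j k"
      using cut_side_sum_qvec[OF j k] by blast
    have "vsign z * c j = (\<Sum>v\<in>X. signed_inc c v)"
      using sum_signed_inc_cut_side[OF X j] by simp
    also have "\<dots> = (\<Sum>v\<in>X. qvec k v)"
      using X c unfolding cut_side_def by (intro sum.cong) auto
    finally show ?thesis
      using sum vsign_nonzero by simp
  qed
  then have "signed_inc (\<lambda>j. pinv_entry j k) x = signed_inc c x"
    by (intro signed_inc_cong) simp
  then show ?thesis
    using c x by simp
qed

lemma signless_laplacian_pinv_entry:
  assumes i: "i < n - 1" and k: "k < n - 1"
  shows "(\<Sum>j<n - 1. (\<Sum>v<n. inc v i * inc v j) * pinv_entry j k) = (if i = k then 1 else 0)"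
proof -
  have "(\<Sum>j<n - 1. (\<Sum>v<n. inc v i * inc v j) * pinv_entry j k) =
      (\<Sum>v<n. \<Sum>j<n - 1. inc v i * inc v j * pinv_entry j k)"
    unfolding sum_distrib_right by (rule sum.swap)
  also have "\<dots> = (\<Sum>v<n. inc v i * (vsign v * signed_inc (\<lambda>j. pinv_entry j k) v))"
  proof (rule sum.cong[OF refl])
    fix v
    have "inc v i * (vsign v * signed_inc (\<lambda>j. pinv_entry j k) v) =
        (\<Sum>j<n - 1. (vsign v * vsign v) * (inc v i * inc v j * pinv_entry j k))"
      unfolding signed_inc_def by (simp add: sum_distrib_left mult_ac)
    then show "(\<Sum>j<n - 1. inc v i * inc v j * pinv_entry j k) =
        inc v i * (vsign v * signed_inc (\<lambda>j. pinv_entry j k) v)"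
      by (simp add: vsign_sq)
  qed
  also have "\<dots> = (\<Sum>v<n. inc v i * (vsign v * qvec k v))"
    using signed_inc_pinv_col[OF k] by simp
  also have "\<dots> = vsign (l i) * (qvec k (l i) - qvec k (m i))"
    using sum_inc_mult[OF i] edge_less[OF i] vsign_joins[OF joins_edge[OF i]]
    by (simp add: right_diff_distrib)
  also have "\<dots> = (if i = k then 1 else 0)"
    using qvec_jump[OF i k] vsign_sq by simp
  finally show ?thesis .
qed

lemma signless_laplacian_mult_pinv:
  "transpose_mat (incidence_mat n e) * incidence_mat n e *
    mat (n - 1) (n - 1) (\<lambda>(i, j). pinv_entry i j) = 1\<^sub>m (n - 1)"
  (is "transpose_mat ?M * ?M * ?B = _")
proof (rule eq_matI)
  fix i k assume "i < dim_row (1\<^sub>m (n - 1) :: real mat)" "k < dim_col (1\<^sub>m (n - 1) :: real mat)"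
  then have ik: "i < n - 1" "k < n - 1" by auto
  have S: "(transpose_mat ?M * ?M) $$ (i, j) = (\<Sum>v<n. inc v i * inc v j)" if "j < n - 1" for j
    using ik that unfolding incidence_mat_def inc_def
    by (simp add: scalar_prod_def atLeast0LessThan)
  have "(transpose_mat ?M * ?M * ?B) $$ (i, k) =
      (\<Sum>j<n - 1. (\<Sum>v<n. inc v i * inc v j) * pinv_entry j k)"
    using ik S by (simp add: incidence_mat_def scalar_prod_def atLeast0LessThan)
  then show "(transpose_mat ?M * ?M * ?B) $$ (i, k) = 1\<^sub>m (n - 1) $$ (i, k)"
    using signless_laplacian_pinv_entry[OF ik] ik by simp
qed (simp_all add: incidence_mat_def)

end

theorem mainTheorem4:
  fixes n :: nat and e :: "nat \<Rightarrow> nat \<times> nat"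
  assumes "is_tree n e"
  defines "M \<equiv> incidence_mat n e"
  defines "S \<equiv> transpose_mat M * M"
  shows "mp_inverse S =
    mat (n-1) (n-1) (\<lambda>(i, j).
      (-1) ^ edist n e i j / real n *
      (if i = j then real (card (head_comp n e i)) * real (card (tail_comp n e i))
       else - (real (card (between_comp n e i j)) * real (card (between_comp n e j i)))))"
proof -
  interpret tree n e
    using assms(1) by unfold_locales
  have "S \<in> carrier_mat (n - 1) (n - 1)"
    unfolding S_def M_def incidence_mat_def carrier_mat_def by simp
  then have "mp_inverse S = mat (n - 1) (n - 1) (\<lambda>(i, j). pinv_entry i j)"
    using signless_laplacian_mult_pinv unfolding S_def M_def
    by (intro mp_inverse_eq_inverse) auto
  then show ?thesis
    unfolding pinv_entry_def .
qed

end
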